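(* Let $G$ be a finite, simple, undirected, connected graph that is $C_4$-free, has order $n$, diameter $d$, and edge-connectivity at least $3$. Then $$d\leq \frac{2n-3}{5}.$$
   Context: A graph is $C_4$-free if it contains no cycle of length four as a (not necessarily induced) subgraph. The edge-connectivity of a connected graph is the minimum number of edges whose removal disconnects it. *)

theory Defs
  imports Complex_Main
begin

definition simple_graph :: "'a set \<Rightarrow> ('a \<Rightarrow> 'a \<Rightarrow> bool) \<Rightarrow> bool" where
  "simple_graph V E \<longleftrightarrow> finite V \<and> (\<forall>x y. E x y \<longrightarrow> x \<in> V \<and> y \<in> V)
     \<and> (\<forall>x y. E x y \<longrightarrow> E y x) \<and> (\<forall>x. \<not> E x x)"

text \<open>A walk of length (length xs - 1) given as its vertex sequence.\<close>
definition is_walk :: "'a set \<Rightarrow> ('a \<Rightarrow> 'a \<Rightarrow> bool) \<Rightarrow> 'a list \<Rightarrow> bool" where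
  "is_walk V E xs \<longleftrightarrow> xs \<noteq> [] \<and> set xs \<subseteq> V \<and>
     (\<forall>i. Suc i < length xs \<longrightarrow> E (xs ! i) (xs ! Suc i))"

definition connected_graph :: "'a set \<Rightarrow> ('a \<Rightarrow> 'a \<Rightarrow> bool) \<Rightarrow> bool" where
  "connected_graph V E \<longleftrightarrow> V \<noteq> {} \<and>
     (\<forall>u\<in>V. \<forall>v\<in>V. \<exists>xs. is_walk V E xs \<and> hd xs = u \<and> last xs = v)"

definition gdist :: "'a set \<Rightarrow> ('a \<Rightarrow> 'a \<Rightarrow> bool) \<Rightarrow> 'a \<Rightarrow> 'a \<Rightarrow> nat" where
  "gdist V E u v = (LEAST k. \<exists>xs. is_walk V E xs \<and> hd xs = u \<and> last xs = v \<and> length xs = Suc k)"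

definition diameter :: "'a set \<Rightarrow> ('a \<Rightarrow> 'a \<Rightarrow> bool) \<Rightarrow> nat" where
  "diameter V E = Max {gdist V E u v | u v. u \<in> V \<and> v \<in> V}"

definition C4_free :: "('a \<Rightarrow> 'a \<Rightarrow> bool) \<Rightarrow> bool" where
  "C4_free E \<longleftrightarrow> \<not> (\<exists>a b c d. distinct [a, b, c, d] \<and> E a b \<and> E b c \<and> E c d \<and> E d a)"

definition edges :: "('a \<Rightarrow> 'a \<Rightarrow> bool) \<Rightarrow> 'a set set" where
  "edges E = {{x, y} | x y. E x y}"

definition delete_edges :: "('a \<Rightarrow> 'a \<Rightarrow> bool) \<Rightarrow> 'a set set \<Rightarrow> 'a \<Rightarrow> 'a \<Rightarrow> bool" where
  "delete_edges E F = (\<lambda>x y. E x y \<and> {x, y} \<notin> F)"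

text \<open>Edge-connectivity at least k (standard convention: at least two vertices,
and deleting fewer than k edges never disconnects the graph).\<close>
definition edge_connectivity_ge :: "'a set \<Rightarrow> ('a \<Rightarrow> 'a \<Rightarrow> bool) \<Rightarrow> nat \<Rightarrow> bool" where
  "edge_connectivity_ge V E k \<longleftrightarrow> card V \<ge> 2 \<and>
     (\<forall>F. F \<subseteq> edges E \<and> card F < k \<longrightarrow> connected_graph V (delete_edges E F))"

end

theory Submission
  imports Defs
begin

(* Let u, v be at distance d = diameter and n_i the number of vertices at distance i from u.
   For i < d the edge cut around the ball of radius i lies between layers i and i + 1, so
   n_i n_(i+1) >= 3. Refining such cuts, and combining them with minimum degree >= 3 and the fact
   that in a C4-free graph two vertices share at most one neighbour, gives local constraints: a layer
   of size 1 is followed two steps later by a layer of size >= 4 and preceded two steps earlier by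
   one of size >= 3, and two consecutive layers of size 2 are flanked by layers of sizes >= 3 with
   sum >= 7. A potential argument along the layer sequence turns these into
   2 (n_0 + ... + n_d) >= 5 d + 3, and n_0 + ... + n_d <= n. *)

lemma sum_card_related_le_card:
  assumes "finite Y" "finite Z"
    and unique: "\<And>y y' z. y \<in> Y \<Longrightarrow> y' \<in> Y \<Longrightarrow> z \<in> Z \<Longrightarrow> R y z \<Longrightarrow> R y' z \<Longrightarrow> y = y'"
  shows "(\<Sum>y\<in>Y. card {z \<in> Z. R y z}) \<le> card Z"
proof -
  have "(\<Sum>y\<in>Y. card {z \<in> Z. R y z}) = card (\<Union>y\<in>Y. {z \<in> Z. R y z})"
    using assms by (intro card_UN_disjoint[symmetric]) auto
  also have "\<dots> \<le> card Z"
    using assms(2) by (intro card_mono) auto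
  finally show ?thesis .
qed

(* Lower bound for the surplus 2 (n 0 + ... + n k) - 5 k, read off from the last three layer sizes
   (a, b, c) = (n (k-2), n (k-1), n k); it is never below 3, which at k = d is the claim. *)
definition layer_credit :: "nat \<Rightarrow> nat \<Rightarrow> nat \<Rightarrow> nat" where
  "layer_credit a b c =
    (if c = 1 then 3
     else if c = 2 then (if b = 2 then (if a \<ge> 4 then 4 else 3) else if b = 3 then 4 else 5)
     else if b = 1 then 3 else if b = 2 then (if c = 3 then 5 else 6) else 6)"

lemma layer_sizes_sum_bound:
  fixes n :: "nat \<Rightarrow> nat"
  assumes "1 \<le> d" and n0: "n 0 = 1"
    and mult: "\<And>i. i < d \<Longrightarrow> 3 \<le> n i * n (Suc i)"
    and after_one: "\<And>i. n i = 1 \<Longrightarrow> i + 2 \<le> d \<Longrightarrow> 4 \<le> n (i + 2)"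
    and before_one: "\<And>i. n (i + 2) = 1 \<Longrightarrow> i + 2 \<le> d \<Longrightarrow> 3 \<le> n i"
    and two_two: "\<And>i. n (i + 1) = 2 \<Longrightarrow> n (i + 2) = 2 \<Longrightarrow> i + 3 \<le> d \<Longrightarrow>
                        3 \<le> n i \<and> 3 \<le> n (i + 3) \<and> 7 \<le> n i + n (i + 3)"
  shows "5 * d + 3 \<le> 2 * (\<Sum>i\<le>d. n i)"
proof -
  have "5 * k + layer_credit (n (k - 2)) (n (k - 1)) (n k) \<le> 2 * (\<Sum>i\<le>k. n i)"
    if "1 \<le> k" "k \<le> d" for k
    using that
  proof (induction k rule: dec_induct)
    case base
    have "3 \<le> n 1" using mult[of 0] \<open>1 \<le> d\<close> n0 by simp
    then show ?case using n0 by (simp add: layer_credit_def)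
  next
    case (step k)
    define a b c x where "a = n (k - 2)" "b = n (k - 1)" "c = n k" "x = n (Suc k)"
    have IH: "5 * k + layer_credit a b c \<le> 2 * (\<Sum>i\<le>k. n i)"
      using step a_b_c_x_def by simp
    have cx: "3 \<le> c * x" using mult[of k] step a_b_c_x_def by simp
    have bc: "3 \<le> b * c" using mult[of "k - 1"] step a_b_c_x_def by simp
    have b1: "b = 1 \<Longrightarrow> 4 \<le> x" using after_one[of "k - 1"] step a_b_c_x_def by simp
    have x1: "x = 1 \<Longrightarrow> 3 \<le> b" using before_one[of "k - 1"] step a_b_c_x_def by simp
    have b2c2: "3 \<le> a \<and> 3 \<le> x \<and> 7 \<le> a + x" if "b = 2" "c = 2"
    proof -
      have "k \<noteq> 1" using n0 that a_b_c_x_def by auto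
      then have "k - 2 + 1 = k - 1" "k - 2 + 2 = k" "k - 2 + 3 = Suc k" using step by auto
      then show ?thesis using two_two[of "k - 2"] step that a_b_c_x_def by simp
    qed
    have "layer_credit b c x + 5 \<le> layer_credit a b c + 2 * x"
    proof -
      have "x \<noteq> 0" using cx by (cases x) auto
      then have "x = 1 \<or> x = 2 \<or> 3 \<le> x" by linarith
      then show ?thesis using x1 cx bc b1 b2c2 by (elim disjE) (auto simp: layer_credit_def)
    qed
    then show ?case using IH by (simp add: a_b_c_x_def)
  qed
  from this[of d] \<open>1 \<le> d\<close> show ?thesis by (simp add: layer_credit_def split: if_splits)
qed

locale connected_simple_graph =
  fixes V :: "'a set" and E :: "'a \<Rightarrow> 'a \<Rightarrow> bool"
  assumes simple: "simple_graph V E" and connected: "connected_graph V E"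
begin

lemma finite_V: "finite V"
  using simple by (simp add: simple_graph_def)

lemma adj_in_V: "E x y \<Longrightarrow> x \<in> V \<and> y \<in> V"
  using simple by (simp add: simple_graph_def)

lemma adj_sym: "E x y \<Longrightarrow> E y x"
  using simple by (simp add: simple_graph_def)

lemma adj_irrefl: "\<not> E x x"
  using simple by (simp add: simple_graph_def)

lemma is_walk_snoc:
  assumes "xs \<noteq> []"
  shows "is_walk V E (xs @ [y]) \<longleftrightarrow> is_walk V E xs \<and> E (last xs) y"
proof
  assume walk: "is_walk V E (xs @ [y])"
  have steps: "E ((xs @ [y]) ! i) ((xs @ [y]) ! Suc i)" if "Suc i < Suc (length xs)" for i
    using walk that by (simp add: is_walk_def)
  have "E ((xs @ [y]) ! (length xs - 1)) ((xs @ [y]) ! Suc (length xs - 1))"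
    using assms by (intro steps) simp
  then have "E (last xs) y"
    using assms by (simp add: nth_append last_conv_nth)
  moreover have "E (xs ! i) (xs ! Suc i)" if "Suc i < length xs" for i
    using steps[of i] that by (simp add: nth_append)
  ultimately show "is_walk V E xs \<and> E (last xs) y"
    using walk assms by (simp add: is_walk_def)
next
  assume walk: "is_walk V E xs \<and> E (last xs) y"
  have "E ((xs @ [y]) ! i) ((xs @ [y]) ! Suc i)" if "Suc i < length (xs @ [y])" for i
  proof (cases "Suc i < length xs")
    case True
    then show ?thesis using walk by (simp add: nth_append is_walk_def)
  next
    case False
    then have "i = length xs - 1" using that by simp
    then show ?thesis using walk assms by (simp add: nth_append last_conv_nth)
  qed
  then show "is_walk V E (xs @ [y])"
    using walk adj_in_V[of "last xs" y] by (simp add: is_walk_def)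
qed

definition walk_of_length :: "nat \<Rightarrow> 'a \<Rightarrow> 'a \<Rightarrow> bool" where
  "walk_of_length k a b \<longleftrightarrow>
     (\<exists>xs. is_walk V E xs \<and> hd xs = a \<and> last xs = b \<and> length xs = Suc k)"

lemma walk_of_length_0: "walk_of_length 0 a b \<longleftrightarrow> a = b \<and> a \<in> V"
proof
  show "walk_of_length 0 a b \<Longrightarrow> a = b \<and> a \<in> V"
    by (auto simp: walk_of_length_def is_walk_def length_Suc_conv)
  show "a = b \<and> a \<in> V \<Longrightarrow> walk_of_length 0 a b"
    unfolding walk_of_length_def by (intro exI[of _ "[a]"]) (auto simp: is_walk_def)
qed

lemma walk_of_length_Suc:
  "walk_of_length (Suc k) a y \<longleftrightarrow> (\<exists>x. walk_of_length k a x \<and> E x y)"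
proof
  assume "walk_of_length (Suc k) a y"
  then obtain xs where xs: "is_walk V E xs" "hd xs = a" "last xs = y" "length xs = Suc (Suc k)"
    by (auto simp: walk_of_length_def)
  define ys where "ys = butlast xs"
  have "length ys = Suc k"
    using xs(4) by (simp add: ys_def)
  moreover have "xs = ys @ [y]"
    using xs(4) by (cases xs rule: rev_cases) (simp_all add: ys_def flip: xs(3))
  ultimately have ys: "ys \<noteq> []" "xs = ys @ [y]" "hd ys = a"
    using xs(2) by (auto simp: hd_append)
  have "is_walk V E ys" "E (last ys) y"
    using xs(1) is_walk_snoc[OF ys(1), of y] ys(2) by simp_all
  then show "\<exists>x. walk_of_length k a x \<and> E x y"
    using ys \<open>length ys = Suc k\<close> unfolding walk_of_length_def by auto
next
  assume "\<exists>x. walk_of_length k a x \<and> E x y"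
  then obtain xs where "is_walk V E xs" "hd xs = a" "E (last xs) y" "length xs = Suc k"
    by (auto simp: walk_of_length_def)
  moreover have "xs \<noteq> []" using \<open>is_walk V E xs\<close> by (simp add: is_walk_def)
  ultimately show "walk_of_length (Suc k) a y"
    unfolding walk_of_length_def by (intro exI[of _ "xs @ [y]"]) (simp add: is_walk_snoc)
qed

lemma gdist_le: "walk_of_length k a b \<Longrightarrow> gdist V E a b \<le> k"
  unfolding gdist_def walk_of_length_def by (rule Least_le) blast

lemma walk_of_length_gdist:
  assumes "a \<in> V" "b \<in> V"
  shows "walk_of_length (gdist V E a b) a b"
proof -
  obtain xs where "is_walk V E xs" "hd xs = a" "last xs = b"
    using connected assms by (auto simp: connected_graph_def)
  moreover have "length xs = Suc (length xs - 1)"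
    using \<open>is_walk V E xs\<close> by (cases xs) (auto simp: is_walk_def)
  ultimately have "walk_of_length (length xs - 1) a b"
    unfolding walk_of_length_def by blast
  then show ?thesis
    unfolding gdist_def walk_of_length_def[symmetric] by (rule LeastI)
qed

lemma gdist_self: "a \<in> V \<Longrightarrow> gdist V E a a = 0"
  using gdist_le[of 0 a a] by (simp add: walk_of_length_0)

lemma gdist_eq_0D: "a \<in> V \<Longrightarrow> b \<in> V \<Longrightarrow> gdist V E a b = 0 \<Longrightarrow> a = b"
  using walk_of_length_gdist[of a b] by (simp add: walk_of_length_0)

lemma gdist_adj_le: "a \<in> V \<Longrightarrow> E x y \<Longrightarrow> gdist V E a y \<le> Suc (gdist V E a x)"
  using walk_of_length_gdist[of a x] adj_in_V[of x y] walk_of_length_Suc gdist_le by blast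

lemma gdist_SucE:
  assumes "a \<in> V" "y \<in> V" "gdist V E a y = Suc k"
  obtains x where "E x y" "gdist V E a x = k"
proof -
  obtain x where x: "walk_of_length k a x" "E x y"
    using walk_of_length_gdist[of a y] assms walk_of_length_Suc by auto
  have "gdist V E a x = k"
    using gdist_le[OF x(1)] gdist_adj_le[OF assms(1) x(2)] assms(3) by simp
  with x(2) show thesis by (rule that)
qed

lemma diameter_attained:
  obtains u v where "u \<in> V" "v \<in> V" "diameter V E = gdist V E u v"
proof -
  have "finite {gdist V E u v | u v. u \<in> V \<and> v \<in> V}"
    using finite_V by (simp add: finite_image_set2)
  moreover have "V \<noteq> {}"
    using connected by (simp add: connected_graph_def)
  ultimately have "diameter V E \<in> {gdist V E u v | u v. u \<in> V \<and> v \<in> V}"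
    unfolding diameter_def by (intro Max_in) auto
  with that show thesis by blast
qed

definition layer :: "'a \<Rightarrow> nat \<Rightarrow> 'a set" where
  "layer u i = {x \<in> V. gdist V E u x = i}"

definition ball :: "'a \<Rightarrow> nat \<Rightarrow> 'a set" where
  "ball u j = {x \<in> V. gdist V E u x \<le> j}"

lemma finite_layer: "finite (layer u i)"
  using finite_V by (simp add: layer_def)

lemma layer_0: "u \<in> V \<Longrightarrow> layer u 0 = {u}"
  using gdist_self gdist_eq_0D by (auto simp: layer_def)

lemma sum_card_layers_le: "(\<Sum>i\<le>d. card (layer u i)) \<le> card V"
proof -
  have "(\<Sum>i\<le>d. card (layer u i)) = card (\<Union>i\<le>d. layer u i)"
    by (intro card_UN_disjoint[symmetric]) (auto simp: finite_layer, auto simp: layer_def)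
  also have "\<dots> \<le> card V"
    using finite_V by (intro card_mono) (auto simp: layer_def)
  finally show ?thesis .
qed

lemma layer_Suc_adj:
  assumes "u \<in> V" "x \<in> layer u (Suc i)" "E x y"
  shows "y \<in> layer u i \<or> y \<in> layer u (Suc i) \<or> y \<in> layer u (Suc (Suc i))"
  using assms gdist_adj_le[OF assms(1) assms(3)] gdist_adj_le[OF assms(1) adj_sym[OF assms(3)]]
    adj_in_V[OF assms(3)] by (auto simp: layer_def)

lemma layer_SucE:
  assumes "u \<in> V" "y \<in> layer u (Suc i)"
  obtains x where "x \<in> layer u i" "E x y"
  using assms gdist_SucE[of u y i] adj_in_V by (auto simp: layer_def)

definition edges_between :: "'a set \<Rightarrow> 'a set \<Rightarrow> 'a set set" where
  "edges_between A B = {{a, b} | a b. a \<in> A \<and> b \<in> B \<and> E a b}"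

definition edge_boundary :: "'a set \<Rightarrow> 'a set set" where
  "edge_boundary S = edges_between S (V - S)"

lemma edges_between_commute: "edges_between A B = edges_between B A"
  unfolding edges_between_def by (blast intro: adj_sym insert_commute)

lemma finite_edges_between: "finite (edges_between A B)"
proof (rule finite_subset)
  show "edges_between A B \<subseteq> Pow V"
    using adj_in_V by (auto simp: edges_between_def)
qed (simp add: finite_V)

lemma card_edges_between_le:
  assumes "finite A"
  shows "card (edges_between A B) \<le> (\<Sum>a\<in>A. card {b \<in> B. E a b})"
proof -
  have "edges_between A B = (\<Union>a\<in>A. (\<lambda>b. {a, b}) ` {b \<in> B. E a b})"
    by (auto simp: edges_between_def)
  then have "card (edges_between A B) \<le> (\<Sum>a\<in>A. card ((\<lambda>b. {a, b}) ` {b \<in> B. E a b}))"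
    by (simp add: card_UN_le assms)
  also have "\<dots> \<le> (\<Sum>a\<in>A. card {b \<in> B. E a b})"
    by (intro sum_mono card_image_le finite_subset[OF _ finite_V]) (auto dest: adj_in_V)
  finally show ?thesis .
qed

lemma card_edges_between_singleton_le: "card (edges_between {a} B) \<le> card {b \<in> B. E a b}"
  using card_edges_between_le[of "{a}" B] by simp

lemma three_edges_between_pairs:
  assumes three: "3 \<le> card (edges_between {h, q} {h', q'})"
    and "h \<noteq> q" "h' \<noteq> q'" and non_edge: "\<not> E q q'"
  shows "E h h' \<and> E h q' \<and> E q h'"
proof -
  let ?H = "{b \<in> {h', q'}. E h b}" and ?Q = "{b \<in> {h', q'}. E q b}"
  have sum: "3 \<le> card ?H + card ?Q"
    using three card_edges_between_le[of "{h, q}" "{h', q'}"] \<open>h \<noteq> q\<close> by simp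
  have "card ?Q \<le> card {h'}"
    using non_edge by (intro card_mono) auto
  then have Q: "card ?Q \<le> 1" by simp
  have "card ?H \<le> card {h', q'}"
    by (intro card_mono) auto
  also have "\<dots> = 2" using \<open>h' \<noteq> q'\<close> by simp
  finally have H: "card ?H \<le> 2" .
  have "E h b" if b: "b \<in> {h', q'}" for b
  proof (rule ccontr)
    assume "\<not> E h b"
    then have "card ?H \<le> card ({h', q'} - {b})"
      by (intro card_mono) auto
    also have "\<dots> = 1"
      using b \<open>h' \<noteq> q'\<close> by auto
    finally show False using sum Q by linarith
  qed
  moreover have "E q h'"
  proof (rule ccontr)
    assume "\<not> E q h'"
    then have "?Q = {}" using non_edge by auto
    then have "card ?Q = 0" by (metis card.empty)
    then show False using sum H by linarith
  qed
  ultimately show ?thesis by blast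
qed

lemma edge_boundary_ball_Un_subset:
  assumes "u \<in> V" "X \<subseteq> layer u (Suc j)"
  shows "edge_boundary (ball u j \<union> X) \<subseteq>
    edges_between (layer u j) (layer u (Suc j) - X) \<union> edges_between X (V - (ball u j \<union> X))"
proof
  fix e assume "e \<in> edge_boundary (ball u j \<union> X)"
  then obtain a b where e: "e = {a, b}" "E a b" "a \<in> ball u j \<union> X" "b \<in> V" "b \<notin> ball u j \<union> X"
    by (auto simp: edge_boundary_def edges_between_def)
  show "e \<in> edges_between (layer u j) (layer u (Suc j) - X) \<union> edges_between X (V - (ball u j \<union> X))"
  proof (cases "a \<in> X")
    case True
    then show ?thesis using e by (auto simp: edges_between_def)
  next
    case False
    then have "a \<in> V" "gdist V E u a \<le> j" "j < gdist V E u b"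
      using e by (auto simp: ball_def)
    moreover have "gdist V E u b \<le> Suc (gdist V E u a)"
      using gdist_adj_le[OF assms(1) e(2)] .
    ultimately have "a \<in> layer u j" "b \<in> layer u (Suc j) - X"
      using e(4,5) by (auto simp: layer_def)
    then show ?thesis using e by (auto simp: edges_between_def)
  qed
qed

lemma card_edge_boundary_ge:
  assumes ec: "edge_connectivity_ge V E k" and S: "S \<subseteq> V" "a \<in> S" "b \<in> V - S"
  shows "k \<le> card (edge_boundary S)"
proof (rule ccontr)
  assume "\<not> k \<le> card (edge_boundary S)"
  moreover have "edge_boundary S \<subseteq> edges E"
    by (auto simp: edge_boundary_def edges_between_def edges_def)
  ultimately have "connected_graph V (delete_edges E (edge_boundary S))"
    using ec by (simp add: edge_connectivity_ge_def)
  then obtain xs where xs: "is_walk V (delete_edges E (edge_boundary S)) xs" "hd xs = a" "last xs = b"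
    using S unfolding connected_graph_def by blast
  have "xs ! i \<in> S" if "i < length xs" for i
    using that
  proof (induction i)
    case 0
    then show ?case using xs(2) S(2) by (simp add: hd_conv_nth)
  next
    case (Suc i)
    then have "E (xs ! i) (xs ! Suc i)" "{xs ! i, xs ! Suc i} \<notin> edge_boundary S" "xs ! i \<in> S"
      using xs(1) by (auto simp: is_walk_def delete_edges_def)
    moreover have "xs ! Suc i \<in> V"
      using xs(1) Suc.prems nth_mem[of "Suc i" xs] by (auto simp: is_walk_def)
    ultimately show ?case
      by (auto simp: edge_boundary_def edges_between_def)
  qed
  then have "last xs \<in> S"
    using xs(1) by (simp add: last_conv_nth is_walk_def)
  then show False using xs(3) S(3) by simp
qed

lemma degree_ge:
  assumes ec: "edge_connectivity_ge V E k" and "w \<in> V"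
  shows "k \<le> card {y. E w y}"
proof -
  have "\<not> V \<subseteq> {w}"
    using ec finite_V card_mono[of "{w}" V] by (auto simp: edge_connectivity_ge_def)
  then obtain b where "b \<in> V - {w}" by auto
  then have "k \<le> card (edge_boundary {w})"
    using assms by (intro card_edge_boundary_ge) auto
  also have "\<dots> \<le> card {b \<in> V - {w}. E w b}"
    unfolding edge_boundary_def by (rule card_edges_between_singleton_le)
  also have "\<dots> \<le> card {y. E w y}"
    by (intro card_mono finite_subset[OF _ finite_V]) (auto dest: adj_in_V)
  finally show ?thesis .
qed

lemma C4_free_common_neighbour_unique:
  assumes "C4_free E" "x \<noteq> y" "E x p" "E y p" "E x q" "E y q"
  shows "p = q"
  using assms adj_sym adj_irrefl unfolding C4_free_def
  by (metis distinct_length_2_or_more distinct_singleton)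

lemma card_3_exists_isolated:
  assumes "card Y = 3"
    and unique: "\<And>y t t'. y \<in> Y \<Longrightarrow> t \<in> Y \<Longrightarrow> t' \<in> Y \<Longrightarrow> E y t \<Longrightarrow> E y t' \<Longrightarrow> t = t'"
  shows "\<exists>y\<in>Y. \<forall>t\<in>Y. \<not> E y t"
proof -
  obtain a b c where Y: "Y = {a, b, c}" "a \<noteq> b" "b \<noteq> c" "a \<noteq> c"
    using assms(1) by (auto simp: card_3_iff)
  then show ?thesis
    using unique[of a b c] unique[of b a c] unique[of c a b] adj_sym[of a b] adj_sym[of a c]
      adj_sym[of b c] adj_sym[of b a] adj_sym[of c a] adj_sym[of c b] adj_irrefl by auto
qed

end

locale C4_free_3_edge_connected_graph = connected_simple_graph +
  assumes C4_free: "C4_free E" and edge_connectivity: "edge_connectivity_ge V E 3"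
begin

lemma common_neighbour_unique: "x \<noteq> y \<Longrightarrow> E x p \<Longrightarrow> E y p \<Longrightarrow> E x q \<Longrightarrow> E y q \<Longrightarrow> p = q"
  using C4_free_common_neighbour_unique[OF C4_free] .

lemma three_le_card_edge_boundary_ball_Un:
  assumes u: "u \<in> V" and v: "v \<in> V" "v \<notin> X"
    and X: "X \<subseteq> layer u (Suc j)" and far: "j < gdist V E u v"
  shows "3 \<le> card (edges_between (layer u j) (layer u (Suc j) - X))
             + card (edges_between X (V - (ball u j \<union> X)))"
proof -
  have "3 \<le> card (edge_boundary (ball u j \<union> X))"
    using assms X gdist_self[OF u] by (intro card_edge_boundary_ge[OF edge_connectivity, of _ u v])
      (auto simp: ball_def layer_def)
  also have "\<dots> \<le> card (edges_between (layer u j) (layer u (Suc j) - X)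
                        \<union> edges_between X (V - (ball u j \<union> X)))"
    using edge_boundary_ball_Un_subset[OF u X] by (intro card_mono) (simp_all add: finite_edges_between)
  also have "\<dots> \<le> card (edges_between (layer u j) (layer u (Suc j) - X))
                 + card (edges_between X (V - (ball u j \<union> X)))"
    by (rule card_Un_le)
  finally show ?thesis .
qed

lemma three_le_card_edges_between_layers:
  assumes "u \<in> V" "v \<in> V" "j < gdist V E u v"
  shows "3 \<le> card (edges_between (layer u j) (layer u (Suc j)))"
  using three_le_card_edge_boundary_ball_Un[of u v "{}" j] assms by (simp add: edges_between_def)

lemma card_layer_mult_ge:
  assumes "u \<in> V" "v \<in> V" "j < gdist V E u v"
  shows "3 \<le> card (layer u j) * card (layer u (Suc j))"
proof -
  have "3 \<le> card (edges_between (layer u j) (layer u (Suc j)))"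
    using three_le_card_edges_between_layers[OF assms] .
  also have "\<dots> \<le> (\<Sum>a\<in>layer u j. card {b \<in> layer u (Suc j). E a b})"
    by (rule card_edges_between_le[OF finite_layer])
  also have "\<dots> \<le> (\<Sum>a\<in>layer u j. card (layer u (Suc j)))"
    by (intro sum_mono card_mono finite_layer) auto
  finally show ?thesis by simp
qed

(* The >= 3 edges leaving ball u (Suc i) all end in x, so x has >= 3 neighbours in layer Suc i;
   their predecessors in layer i are distinct, as two of them sharing one would also share x. *)
lemma card_layer_before_singleton:
  assumes u: "u \<in> V" and x: "layer u (Suc (Suc i)) = {x}"
  shows "3 \<le> card (layer u i)"
proof -
  define Y where "Y = {y \<in> layer u (Suc i). E x y}"
  have "x \<in> V" "gdist V E u x = Suc (Suc i)"
    using x by (auto simp: layer_def)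
  then have "3 \<le> card (edges_between (layer u (Suc i)) (layer u (Suc (Suc i))))"
    using three_le_card_edges_between_layers[OF u, of x "Suc i"] by simp
  also have "\<dots> \<le> card Y"
    using card_edges_between_le[of "{x}" "layer u (Suc i)"] x
    by (simp add: edges_between_commute Y_def)
  also have "\<dots> \<le> (\<Sum>y\<in>Y. card {w \<in> layer u i. E y w})"
  proof -
    have "1 \<le> card {w \<in> layer u i. E y w}" if "y \<in> Y" for y
    proof -
      have "y \<in> layer u (Suc i)" using that by (simp add: Y_def)
      then obtain w where "w \<in> layer u i" "E w y" by (rule layer_SucE[OF u])
      then show ?thesis
        using finite_layer[of u i] by (auto simp: Suc_le_eq card_gt_0_iff intro: adj_sym)
    qed
    then have "(\<Sum>y\<in>Y. 1) \<le> (\<Sum>y\<in>Y. card {w \<in> layer u i. E y w})"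
      by (rule sum_mono)
    then show ?thesis by simp
  qed
  also have "\<dots> \<le> card (layer u i)"
  proof (rule sum_card_related_le_card)
    show "finite Y" by (simp add: Y_def finite_layer)
    fix y y' w assume "y \<in> Y" "y' \<in> Y" "w \<in> layer u i" "E y w" "E y' w"
    moreover have "w \<noteq> x"
      using \<open>w \<in> layer u i\<close> x by (auto simp: layer_def)
    ultimately show "y = y'"
      using common_neighbour_unique[of w x y y'] by (auto simp: Y_def intro: adj_sym)
  qed (rule finite_layer)
  finally show ?thesis .
qed

context
  fixes u i x
  assumes u: "u \<in> V" and singleton: "layer u i = {x}"
begin

lemma singleton_layer_adj: "y \<in> layer u (Suc i) \<Longrightarrow> E x y"
  using layer_SucE[OF u, of y i] singleton by auto

lemma singleton_layer_not_after: "x \<notin> layer u (Suc i)" "x \<notin> layer u (Suc (Suc i))"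
  using singleton by (auto simp: layer_def)

lemma after_singleton_nbr_unique:
  assumes "y \<in> layer u (Suc i)" "t \<in> layer u (Suc i)" "t' \<in> layer u (Suc i)" "E y t" "E y t'"
  shows "t = t'"
  using common_neighbour_unique[of y x t t'] assms singleton_layer_adj singleton_layer_not_after
  by auto

lemma after_singleton_next_nbr_unique:
  assumes "y \<in> layer u (Suc i)" "y' \<in> layer u (Suc i)" "z \<in> layer u (Suc (Suc i))" "E y z" "E y' z"
  shows "y = y'"
  using common_neighbour_unique[of z x y y'] assms singleton_layer_adj singleton_layer_not_after
  by (auto intro: adj_sym)

lemma after_singleton_degree:
  assumes y: "y \<in> layer u (Suc i)"
  shows "3 \<le> card {t \<in> layer u (Suc i). E y t} + card {z \<in> layer u (Suc (Suc i)). E y z} + 1"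
proof -
  let ?T = "{t \<in> layer u (Suc i). E y t}" and ?Z = "{z \<in> layer u (Suc (Suc i)). E y z}"
  have "3 \<le> card {w. E y w}"
    using degree_ge[OF edge_connectivity] y by (simp add: layer_def)
  also have "\<dots> \<le> card (?T \<union> ?Z \<union> {x})"
    using layer_Suc_adj[OF u y] singleton by (intro card_mono) (auto simp: finite_layer)
  also have "\<dots> \<le> card ?T + card ?Z + 1"
    using card_Un_le[of "?T \<union> ?Z" "{x}"] card_Un_le[of ?T ?Z] by simp
  finally show ?thesis .
qed

end

(* The vertices of layer Suc i each have one neighbour in layer Suc (Suc i), and two if they have
   none in their own layer, which is the case for one of them if there are exactly three; the
   neighbours found this way are distinct. *)
lemma card_layer_after_singleton:
  assumes u: "u \<in> V" and v: "v \<in> V" and x: "layer u i = {x}"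
    and far: "Suc (Suc i) \<le> gdist V E u v"
  shows "4 \<le> card (layer u (Suc (Suc i)))"
proof -
  define Y Z where "Y = layer u (Suc i)" and "Z = layer u (Suc (Suc i))"
  have Y_nbrs: "card {t \<in> Y. E y t} \<le> 1" if "y \<in> Y" for y
    using after_singleton_nbr_unique[OF u x that[unfolded Y_def]]
    by (auto simp: card_le_Suc0_iff_eq finite_layer Y_def)
  have Z_nbrs: "1 \<le> card {z \<in> Z. E y z}" if "y \<in> Y" for y
    using after_singleton_degree[OF u x, of y] Y_nbrs[OF that] that by (simp add: Y_def Z_def)
  have sum_le: "(\<Sum>y\<in>Y. card {z \<in> Z. E y z}) \<le> card Z"
    using after_singleton_next_nbr_unique[OF u x]
    by (intro sum_card_related_le_card) (auto simp: Y_def Z_def finite_layer)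
  have "3 \<le> card Y"
    using card_layer_mult_ge[OF u v, of i] far x by (simp add: Y_def)
  then consider "4 \<le> card Y" | "card Y = 3" by linarith
  then show ?thesis
  proof cases
    case 1
    have "card Y = (\<Sum>y\<in>Y. 1)" by simp
    also have "\<dots> \<le> (\<Sum>y\<in>Y. card {z \<in> Z. E y z})"
      using Z_nbrs by (rule sum_mono)
    finally show ?thesis using 1 sum_le by (simp add: Z_def)
  next
    case 2
    then obtain y0 where y0: "y0 \<in> Y" "{t \<in> Y. E y0 t} = {}"
      using card_3_exists_isolated[of Y] after_singleton_nbr_unique[OF u x] by (auto simp: Y_def)
    then have "card {t \<in> Y. E y0 t} = 0" by (metis card.empty)
    then have "2 \<le> card {z \<in> Z. E y0 z}"
      using after_singleton_degree[OF u x, of y0] y0(1) unfolding Y_def Z_def by linarith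
    then have "2 + (\<Sum>y\<in>Y - {y0}. 1) \<le> card {z \<in> Z. E y0 z} + (\<Sum>y\<in>Y - {y0}. card {z \<in> Z. E y z})"
      using Z_nbrs by (intro add_mono sum_mono) auto
    also have "\<dots> = (\<Sum>y\<in>Y. card {z \<in> Z. E y z})"
      using y0(1) by (simp add: sum.remove Y_def finite_layer)
    finally show ?thesis using 2 y0(1) sum_le by (simp add: Y_def Z_def finite_layer)
  qed
qed

context
  fixes u v k h q h' q'
  assumes u: "u \<in> V" and v: "v \<in> V" and far: "Suc (Suc (Suc k)) \<le> gdist V E u v"
    and lower: "layer u (Suc k) = {h, q}" "h \<noteq> q"
    and upper: "layer u (Suc (Suc k)) = {h', q'}" "h' \<noteq> q'"
    and edges: "E h h'" "E h q'" "E q h'" and non_edge: "\<not> E q q'"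
begin

lemma two_two_layers_dist:
  "gdist V E u h = Suc k" "gdist V E u q = Suc k"
  "gdist V E u h' = Suc (Suc k)" "gdist V E u q' = Suc (Suc k)"
  "h \<in> V" "q \<in> V" "h' \<in> V" "q' \<in> V"
  using lower upper by (auto simp: layer_def)

lemma two_two_layers_below_sum:
  "3 \<le> card {a \<in> layer u k. E h a} + card {a \<in> layer u k. E q a}"
proof -
  have "3 \<le> card (edges_between (layer u k) (layer u (Suc k)))"
    using three_le_card_edges_between_layers[OF u v] far by simp
  also have "\<dots> \<le> (\<Sum>b\<in>{h, q}. card {a \<in> layer u k. E b a})"
    using card_edges_between_le[of "{h, q}" "layer u k"] lower by (simp add: edges_between_commute)
  finally show ?thesis using lower by simp
qed

lemma two_two_layers_below_le:
  "card {a \<in> layer u k. E h a} + card {a \<in> layer u k. E q a} \<le> card (layer u k)"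
proof -
  have "(\<Sum>b\<in>{h, q}. card {a \<in> layer u k. E b a}) \<le> card (layer u k)"
  proof (rule sum_card_related_le_card)
    fix b b' a assume b: "b \<in> {h, q}" "b' \<in> {h, q}" and a: "a \<in> layer u k" "E b a" "E b' a"
    have "a \<noteq> h'"
      using a two_two_layers_dist by (auto simp: layer_def)
    then show "b = b'"
      using b a common_neighbour_unique[of a h' h q] edges lower(2) by (auto intro: adj_sym)
  qed (simp_all add: finite_layer)
  then show ?thesis using lower by simp
qed

lemma two_two_layers_above_sum:
  "3 \<le> card {c \<in> layer u (Suc (Suc (Suc k))). E h' c} + card {c \<in> layer u (Suc (Suc (Suc k))). E q' c}"
proof -
  have "3 \<le> card (edges_between (layer u (Suc (Suc k))) (layer u (Suc (Suc (Suc k)))))"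
    using three_le_card_edges_between_layers[OF u v] far by simp
  also have "\<dots> \<le> (\<Sum>b\<in>{h', q'}. card {c \<in> layer u (Suc (Suc (Suc k))). E b c})"
    using card_edges_between_le[of "{h', q'}"] upper by simp
  finally show ?thesis using upper by simp
qed

lemma two_two_layers_above_le:
  "card {c \<in> layer u (Suc (Suc (Suc k))). E h' c} + card {c \<in> layer u (Suc (Suc (Suc k))). E q' c}
     \<le> card (layer u (Suc (Suc (Suc k))))"
proof -
  have "(\<Sum>b\<in>{h', q'}. card {c \<in> layer u (Suc (Suc (Suc k))). E b c}) \<le> card (layer u (Suc (Suc (Suc k))))"
  proof (rule sum_card_related_le_card)
    fix b b' c assume b: "b \<in> {h', q'}" "b' \<in> {h', q'}"
      and c: "c \<in> layer u (Suc (Suc (Suc k)))" "E b c" "E b' c"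
    have "c \<noteq> h"
      using c two_two_layers_dist by (auto simp: layer_def)
    then show "b = b'"
      using b c common_neighbour_unique[of c h h' q'] edges upper(2) by (auto intro: adj_sym)
  qed (simp_all add: finite_layer)
  then show ?thesis using upper by simp
qed

lemma two_two_layers_not_both: "\<not> (E q h \<and> E h' q')"
proof
  assume "E q h \<and> E h' q'"
  moreover have "q \<noteq> q'" "h \<noteq> h'"
    using two_two_layers_dist by auto
  ultimately show False
    using common_neighbour_unique[of q q' h h'] edges by (auto intro: adj_sym)
qed

lemma two_two_layers_q_nbrs:
  assumes "\<not> E q h"
  shows "{b. E q b} \<subseteq> {a \<in> layer u k. E q a} \<union> {h'}"
proof
  fix b assume "b \<in> {b. E q b}"
  then have "E q b" by simp
  then have "b \<in> layer u k \<or> b \<in> {h, q} \<or> b \<in> {h', q'}"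
    using layer_Suc_adj[OF u, of q k b] lower upper by simp
  then show "b \<in> {a \<in> layer u k. E q a} \<union> {h'}"
    using \<open>E q b\<close> assms non_edge adj_irrefl[of q] by auto
qed

lemma two_two_layers_below_q_ge_2:
  assumes "\<not> E q h"
  shows "2 \<le> card {a \<in> layer u k. E q a}"
proof -
  have "3 \<le> card {b. E q b}"
    using degree_ge[OF edge_connectivity] two_two_layers_dist by simp
  also have "\<dots> \<le> card ({a \<in> layer u k. E q a} \<union> {h'})"
    using two_two_layers_q_nbrs[OF assms] by (intro card_mono) (simp_all add: finite_layer)
  also have "\<dots> \<le> card {a \<in> layer u k. E q a} + 1"
    using card_Un_le[of _ "{h'}"] by simp
  finally show ?thesis by simp
qed

(* Apart from the edges between h and layer k, only q h' leaves ball u k \<union> {q}. *)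
lemma two_two_layers_below_h_ge_2:
  assumes "\<not> E q h"
  shows "2 \<le> card {a \<in> layer u k. E h a}"
proof -
  have "3 \<le> card (edges_between (layer u k) (layer u (Suc k) - {q}))
            + card (edges_between {q} (V - (ball u k \<union> {q})))"
  proof (rule three_le_card_edge_boundary_ball_Un[OF u v])
    show "v \<notin> {q}" "k < gdist V E u v"
      using far two_two_layers_dist by auto
  qed (simp add: lower)
  also have "card (edges_between (layer u k) (layer u (Suc k) - {q})) \<le> card {a \<in> layer u k. E h a}"
    using card_edges_between_le[of "{h}" "layer u k"] lower
    by (simp add: edges_between_commute insert_Diff_if)
  also have "card (edges_between {q} (V - (ball u k \<union> {q}))) \<le> card {h'}"
  proof -
    have "card (edges_between {q} (V - (ball u k \<union> {q})))
            \<le> card {b \<in> V - (ball u k \<union> {q}). E q b}"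
      by (rule card_edges_between_singleton_le)
    also have "\<dots> \<le> card {h'}"
      using two_two_layers_q_nbrs[OF assms] by (intro card_mono) (auto simp: ball_def layer_def)
    finally show ?thesis .
  qed
  finally show ?thesis by simp
qed

lemma two_two_layers_q'_h'_nbrs:
  assumes "\<not> E h' q'"
  shows "{b. E q' b} \<subseteq> {c \<in> layer u (Suc (Suc (Suc k))). E q' c} \<union> {h}"
    and "{b. E h' b} \<subseteq> layer u (Suc k) \<union> {c \<in> layer u (Suc (Suc (Suc k))). E h' c}"
proof -
  have "b \<in> layer u (Suc k) \<or> b \<in> {h', q'} \<or> b \<in> layer u (Suc (Suc (Suc k)))"
    if "x \<in> {h', q'}" "E x b" for x b
    using layer_Suc_adj[OF u, of x "Suc k" b] that upper by simp
  then show "{b. E q' b} \<subseteq> {c \<in> layer u (Suc (Suc (Suc k))). E q' c} \<union> {h}"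
    and "{b. E h' b} \<subseteq> layer u (Suc k) \<union> {c \<in> layer u (Suc (Suc (Suc k))). E h' c}"
    using assms non_edge lower adj_irrefl adj_sym[of q' q] adj_sym[of q' h'] by auto
qed

lemma two_two_layers_above_q'_ge_2:
  assumes "\<not> E h' q'"
  shows "2 \<le> card {c \<in> layer u (Suc (Suc (Suc k))). E q' c}"
proof -
  have "3 \<le> card {b. E q' b}"
    using degree_ge[OF edge_connectivity] two_two_layers_dist by simp
  also have "\<dots> \<le> card ({c \<in> layer u (Suc (Suc (Suc k))). E q' c} \<union> {h})"
    using two_two_layers_q'_h'_nbrs(1)[OF assms] by (intro card_mono) (simp_all add: finite_layer)
  also have "\<dots> \<le> card {c \<in> layer u (Suc (Suc (Suc k))). E q' c} + 1"
    using card_Un_le[of _ "{h}"] by simp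
  finally show ?thesis by simp
qed

(* Apart from the edges between h' and the next layer, only h q' leaves ball u (Suc k) \<union> {h'}. *)
lemma two_two_layers_above_h'_ge_2:
  assumes "\<not> E h' q'"
  shows "2 \<le> card {c \<in> layer u (Suc (Suc (Suc k))). E h' c}"
proof -
  have "3 \<le> card (edges_between (layer u (Suc k)) (layer u (Suc (Suc k)) - {h'}))
            + card (edges_between {h'} (V - (ball u (Suc k) \<union> {h'})))"
  proof (rule three_le_card_edge_boundary_ball_Un[OF u v])
    show "v \<notin> {h'}" "Suc k < gdist V E u v"
      using far two_two_layers_dist by auto
  qed (simp add: upper)
  also have "card (edges_between (layer u (Suc k)) (layer u (Suc (Suc k)) - {h'})) \<le> card {h}"
  proof -
    have "card (edges_between (layer u (Suc k)) (layer u (Suc (Suc k)) - {h'}))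
            = card (edges_between {q'} (layer u (Suc k)))"
      using upper by (simp add: edges_between_commute insert_Diff_if)
    also have "\<dots> \<le> card {b \<in> layer u (Suc k). E q' b}"
      by (rule card_edges_between_singleton_le)
    also have "\<dots> \<le> card {h}"
      using two_two_layers_q'_h'_nbrs(1)[OF assms] by (intro card_mono) (auto simp: layer_def)
    finally show ?thesis .
  qed
  also have "card (edges_between {h'} (V - (ball u (Suc k) \<union> {h'})))
               \<le> card {c \<in> layer u (Suc (Suc (Suc k))). E h' c}"
  proof -
    have "card (edges_between {h'} (V - (ball u (Suc k) \<union> {h'})))
            \<le> card {b \<in> V - (ball u (Suc k) \<union> {h'}). E h' b}"
      by (rule card_edges_between_singleton_le)
    also have "\<dots> \<le> card {c \<in> layer u (Suc (Suc (Suc k))). E h' c}"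
      using two_two_layers_q'_h'_nbrs(2)[OF assms]
      by (intro card_mono) (simp add: finite_layer, auto simp: ball_def layer_def)
    finally show ?thesis .
  qed
  finally show ?thesis by simp
qed

lemma labelled_two_two_layers_bound:
  "3 \<le> card (layer u k) \<and> 3 \<le> card (layer u (Suc (Suc (Suc k)))) \<and>
   7 \<le> card (layer u k) + card (layer u (Suc (Suc (Suc k))))"
  using two_two_layers_below_sum two_two_layers_below_le two_two_layers_above_sum
    two_two_layers_above_le two_two_layers_not_both two_two_layers_below_q_ge_2
    two_two_layers_below_h_ge_2 two_two_layers_above_q'_ge_2 two_two_layers_above_h'_ge_2
    by linarith

end

lemma two_two_layers_labelling:
  assumes u: "u \<in> V" and v: "v \<in> V" and far: "Suc k < gdist V E u v"
    and "card (layer u (Suc k)) = 2" "card (layer u (Suc (Suc k))) = 2"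
  obtains h q h' q' where "layer u (Suc k) = {h, q}" "h \<noteq> q"
    "layer u (Suc (Suc k)) = {h', q'}" "h' \<noteq> q'" "E h h'" "E h q'" "E q h'" "\<not> E q q'"
proof -
  obtain b1 b2 d1 d2 where B: "layer u (Suc k) = {b1, b2}" "b1 \<noteq> b2"
    and D: "layer u (Suc (Suc k)) = {d1, d2}" "d1 \<noteq> d2"
    using assms(4,5) by (auto simp: card_2_iff)
  have "\<not> (E b1 d1 \<and> E b1 d2 \<and> E b2 d1 \<and> E b2 d2)"
    using common_neighbour_unique[of b1 b2 d1 d2] B D by blast
  then consider "\<not> E b1 d1" | "\<not> E b1 d2" | "\<not> E b2 d1" | "\<not> E b2 d2" by blast
  then obtain h q h' q' where hq: "layer u (Suc k) = {h, q}" "h \<noteq> q"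
    and hq': "layer u (Suc (Suc k)) = {h', q'}" "h' \<noteq> q'" and non_edge: "\<not> E q q'"
  proof cases
    case 1
    then show thesis using B D by (intro that[of b2 b1 d2 d1]) (auto simp: insert_commute)
  next
    case 2
    then show thesis using B D by (intro that[of b2 b1 d1 d2]) (auto simp: insert_commute)
  next
    case 3
    then show thesis using B D by (intro that[of b1 b2 d2 d1]) (auto simp: insert_commute)
  next
    case 4
    then show thesis using B D by (intro that[of b1 b2 d1 d2]) auto
  qed
  have "3 \<le> card (edges_between {h, q} {h', q'})"
    using three_le_card_edges_between_layers[OF u v far] hq hq' by simp
  then have "E h h' \<and> E h q' \<and> E q h'"
    using hq(2) hq'(2) non_edge by (rule three_edges_between_pairs)
  with hq hq' non_edge show thesis
    using that by blast
qed

lemma two_two_layers_bound: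
  assumes u: "u \<in> V" and v: "v \<in> V" and far: "Suc (Suc (Suc k)) \<le> gdist V E u v"
    and "card (layer u (Suc k)) = 2" "card (layer u (Suc (Suc k))) = 2"
  shows "3 \<le> card (layer u k) \<and> 3 \<le> card (layer u (Suc (Suc (Suc k)))) \<and>
         7 \<le> card (layer u k) + card (layer u (Suc (Suc (Suc k))))"
proof -
  have "Suc k < gdist V E u v" using far by simp
  then show ?thesis
  proof (rule two_two_layers_labelling[OF u v _ assms(4,5)])
    fix h q h' q'
    assume "layer u (Suc k) = {h, q}" "h \<noteq> q" "layer u (Suc (Suc k)) = {h', q'}" "h' \<noteq> q'"
      "E h h'" "E h q'" "E q h'" "\<not> E q q'"
    then show ?thesis by (rule labelled_two_two_layers_bound[OF u v far])
  qed
qed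

lemma five_diameter_le: "5 * diameter V E + 3 \<le> 2 * card V"
proof -
  obtain u v where u: "u \<in> V" and v: "v \<in> V" and diam: "diameter V E = gdist V E u v"
    by (rule diameter_attained)
  define d where "d = gdist V E u v"
  show ?thesis
  proof (cases "d = 0")
    case True
    then show ?thesis
      using edge_connectivity diam by (simp add: d_def edge_connectivity_ge_def)
  next
    case False
    have "5 * d + 3 \<le> 2 * (\<Sum>i\<le>d. card (layer u i))"
    proof (rule layer_sizes_sum_bound)
      show "card (layer u 0) = 1"
        using layer_0[OF u] by simp
      show "3 \<le> card (layer u i) * card (layer u (Suc i))" if "i < d" for i
        using card_layer_mult_ge[OF u v] that by (simp add: d_def)
      show "4 \<le> card (layer u (i + 2))" if one: "card (layer u i) = 1" and near: "i + 2 \<le> d" for i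
      proof -
        obtain x where "layer u i = {x}"
          using one by (rule card_1_singletonE)
        then show ?thesis
          using card_layer_after_singleton[OF u v] near by (simp add: d_def numeral_2_eq_2)
      qed
      show "3 \<le> card (layer u i)" if one: "card (layer u (i + 2)) = 1" for i
      proof -
        have "card (layer u (Suc (Suc i))) = 1"
          using one by (simp add: numeral_2_eq_2)
        then obtain x where "layer u (Suc (Suc i)) = {x}"
          by (rule card_1_singletonE)
        then show ?thesis by (rule card_layer_before_singleton[OF u])
      qed
      show "3 \<le> card (layer u i) \<and> 3 \<le> card (layer u (i + 3)) \<and>
            7 \<le> card (layer u i) + card (layer u (i + 3))"
        if "card (layer u (i + 1)) = 2" "card (layer u (i + 2)) = 2" "i + 3 \<le> d" for i
        using that two_two_layers_bound[OF u v] by (simp add: d_def numeral_3_eq_3)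
    qed (use False in simp)
    also have "\<dots> \<le> 2 * card V"
      using sum_card_layers_le by simp
    finally show ?thesis by (simp add: diam d_def)
  qed
qed

end

theorem theorem1:
  fixes V :: "'a set" and E :: "'a \<Rightarrow> 'a \<Rightarrow> bool"
  assumes "simple_graph V E"
    and "connected_graph V E"
    and "C4_free E"
    and "edge_connectivity_ge V E 3"
  shows "real (diameter V E) \<le> (2 * real (card V) - 3) / 5"
proof -
  interpret C4_free_3_edge_connected_graph V E
    using assms by unfold_locales
  have "real (5 * diameter V E + 3) \<le> real (2 * card V)"
    using five_diameter_le by (simp only: of_nat_le_iff)
  then show ?thesis by simp
qed

end
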